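(* Let $d\geq2$, $m>0$, $1\leq d'\leq d-1$, and let $p$ be the distribution on $\mathbb{Z}^d$ given by $p_{k_1,\dots,k_d}=f_{m,d}(a_1,\dots,a_d)^{-1}\big(1+\sum_{i=1}^d k_i^2/a_i^2\big)^{-\frac{m+d}{2}}$, with $f_{m,d}$ the normalizing constant. Let $p_{k_1,\dots,k_{d'}}=\sum_{(k_{d'+1},\dots,k_d)\in\mathbb{Z}^{d-d'}}p_{k_1,\dots,k_d}$ be its $d'$-variate marginal. Then for every fixed $(k_1,\dots,k_{d'})\in\mathbb{Z}^{d'}$, as $\min_{1\le i\le d}a_i\to\infty$, $$\frac{p_{k_1,\dots,k_{d'}}}{\dfrac{\Gamma(\frac{m+d'}{2})}{\pi^{d'/2}\,\Gamma(\frac m2)\prod_{i=1}^{d'}a_i}\Big(1+\sum_{i=1}^{d'}\dfrac{k_i^2}{a_i^2}\Big)^{-\frac{m+d'}{2}}}\to1,$$ i.e. the marginal is asymptotically the $d'$-variate discrete Tsallis law with the same parameter $m$.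
   Context: $\Gamma$ is the Euler Gamma function; $f_{m,d}(a_1,\dots,a_d)=\sum_{k\in\mathbb{Z}^d}\big(1+\sum_{i=1}^dk_i^2/a_i^2\big)^{-\frac{m+d}{2}}$. *)

theory Defs
  imports "HOL-Analysis.Analysis"
begin

text \<open>Integer vectors in Z^d, represented as functions nat => int supported on {..<d}.\<close>
definition zvecs :: "nat \<Rightarrow> (nat \<Rightarrow> int) set" where
  "zvecs d = {k. \<forall>i\<ge>d. k i = 0}"

definition tsallis_weight :: "real \<Rightarrow> nat \<Rightarrow> (nat \<Rightarrow> real) \<Rightarrow> (nat \<Rightarrow> int) \<Rightarrow> real" where
  "tsallis_weight m d a k =
     (1 + (\<Sum>i<d. (of_int (k i))\<^sup>2 / (a i)\<^sup>2)) powr (- (m + real d) / 2)"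

definition tsallis_f :: "real \<Rightarrow> nat \<Rightarrow> (nat \<Rightarrow> real) \<Rightarrow> real" where
  "tsallis_f m d a = infsum (tsallis_weight m d a) (zvecs d)"

definition tsallis_p :: "real \<Rightarrow> nat \<Rightarrow> (nat \<Rightarrow> real) \<Rightarrow> (nat \<Rightarrow> int) \<Rightarrow> real" where
  "tsallis_p m d a k = tsallis_weight m d a k / tsallis_f m d a"

definition tsallis_marginal ::
  "real \<Rightarrow> nat \<Rightarrow> nat \<Rightarrow> (nat \<Rightarrow> real) \<Rightarrow> (nat \<Rightarrow> int) \<Rightarrow> real" where
  "tsallis_marginal m d d' a k0 =
     infsum (tsallis_p m d a) {k \<in> zvecs d. \<forall>i<d'. k i = k0 i}"

definition tsallis_approx :: "real \<Rightarrow> nat \<Rightarrow> (nat \<Rightarrow> real) \<Rightarrow> (nat \<Rightarrow> int) \<Rightarrow> real" where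
  "tsallis_approx m d' a k0 =
     Gamma ((m + real d') / 2) / (pi powr (real d' / 2) * Gamma (m / 2) * (\<Prod>i<d'. a i))
     * (1 + (\<Sum>i<d'. (of_int (k0 i))\<^sup>2 / (a i)\<^sup>2)) powr (- (m + real d') / 2)"

end

theory Submission
  imports Defs "HOL-Real_Asymp.Real_Asymp"
begin

text \<open>
  By the integral test for a monotone even function, the sum of \<open>(c + t\<^sup>2 / b\<^sup>2) powr (-s)\<close>
  over \<open>t \<in> \<int>\<close> differs by at most \<open>c powr (-s)\<close> from the integral
  \<open>b * c powr (1/2 - s) * Beta (1/2) (s - 1/2)\<close>; this is a relative error below \<open>\<epsilon>\<close> once \<open>b\<close>
  is large, uniformly in \<open>c \<ge> 1\<close>. Summing out one coordinate at a time (Tonelli), the sum of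
  \<open>(c + (\<Sum>i\<in>I. k i\<^sup>2 / a i\<^sup>2)) powr (-s)\<close> over \<open>\<int>\<^sup>I\<close> is therefore within a factor
  \<open>(1 \<plusminus> \<epsilon>) ^ card I\<close> of the corresponding integral over \<open>\<real>\<^sup>I\<close>, as soon as all \<open>a i\<close> are
  large. With \<open>s = (m + d) / 2\<close>, the marginal is the quotient of such a sum over the last
  \<open>d - d'\<close> coordinates, with \<open>c = 1 + (\<Sum>i<d'. k\<^sub>0 i\<^sup>2 / a i\<^sup>2)\<close>, by the normalising sum over
  all \<open>d\<close> coordinates, with \<open>c = 1\<close>; the quotient of the two integrals is exactly the
  \<open>d'\<close>-variate Tsallis density.
\<close>

section \<open>Infinite sums: integral comparison and iterated bounds\<close>

lemma has_sum_int_even: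
  fixes f :: "real \<Rightarrow> real"
  assumes even: "\<And>x. f (- x) = f x"
    and nat: "((\<lambda>n. f (real n)) has_sum T) UNIV"
  shows "((\<lambda>t::int. f (of_int t)) has_sum (2 * T - f 0)) UNIV"
proof -
  define g where "g t = f (of_int t)" for t :: int
  have "(g has_sum T) (int ` UNIV)"
    using nat by (subst has_sum_reindex) (auto simp: g_def o_def)
  moreover have "int ` UNIV = {0..}"
    by (auto simp: image_iff intro: nonneg_int_cases)
  ultimately have nonneg_part: "(g has_sum T) {0..}"
    by simp
  have "(g has_sum T) ((\<lambda>n. - int n) ` UNIV)"
    using nat by (subst has_sum_reindex) (auto simp: g_def o_def even inj_def)
  moreover have "(\<lambda>n. - int n) ` UNIV = {..0}"
    by (auto simp: image_iff intro!: exI[of _ "nat (- _)"])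
  ultimately have "(g has_sum T) {..0}"
    by simp
  then have neg_part: "(g has_sum (T - f 0)) ({..0} - {0})"
    by (rule has_sum_Diff) (use has_sum_finite[of "{0}" g] in \<open>auto simp: g_def\<close>)
  have "(g has_sum (T + (T - f 0))) ({0..} \<union> ({..0} - {0}))"
    by (rule has_sum_Un_disjoint[OF nonneg_part neg_part]) auto
  moreover have "{0..} \<union> ({..0} - {0}) = (UNIV :: int set)"
    by auto
  ultimately show ?thesis
    unfolding g_def by (simp add: algebra_simps)
qed

lemma has_sum_int_antimono_even:
  fixes f :: "real \<Rightarrow> real"
  assumes "antimono_fun_sum_integral_diff f"
    and even: "\<And>x. f (- x) = f x"
    and lim: "((\<lambda>X. integral {0..X} f) \<longlongrightarrow> J) at_top"
  shows "\<exists>S. ((\<lambda>t::int. f (of_int t)) has_sum S) UNIV \<and> \<bar>S - 2 * J\<bar> \<le> f 0"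
proof -
  interpret antimono_fun_sum_integral_diff f by fact
  obtain \<delta> where \<delta>: "sum_integral_diff_series \<longlonglongrightarrow> \<delta>"
    using sum_integral_diff_series_convergent convergent_def by blast
  have "0 \<le> \<delta>"
    by (rule LIMSEQ_le_const[OF \<delta>]) (use sum_integral_diff_series_nonneg in auto)
  moreover have "\<delta> \<le> f 0"
  proof (rule LIMSEQ_le_const2[OF \<delta>])
    show "\<exists>N. \<forall>n\<ge>N. sum_integral_diff_series n \<le> f 0"
      using sum_integral_diff_series_antimono[of 0]
      by (auto simp: sum_integral_diff_series_def)
  qed
  moreover have "(\<lambda>n. f (real n)) sums (J + \<delta>)"
  proof -
    have "(\<lambda>n. integral {0..real n} f) \<longlonglongrightarrow> J"
      using filterlim_compose[OF lim filterlim_real_sequentially] by simp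
    then have "(\<lambda>n. integral {0..real n} f + sum_integral_diff_series n) \<longlonglongrightarrow> J + \<delta>"
      by (rule tendsto_add[OF _ \<delta>])
    then show ?thesis
      by (simp add: sums_def_le sum_integral_diff_series_def)
  qed
  then have "((\<lambda>n. f (real n)) has_sum (J + \<delta>)) UNIV"
    by (rule sums_nonneg_imp_has_sum) (simp add: nonneg)
  then have "((\<lambda>t::int. f (of_int t)) has_sum (2 * (J + \<delta>) - f 0)) UNIV"
    by (rule has_sum_int_even[where f = f, OF even])
  moreover have "\<bar>(2 * (J + \<delta>) - f 0) - 2 * J\<bar> \<le> f 0"
    using \<open>0 \<le> \<delta>\<close> \<open>\<delta> \<le> f 0\<close> by (simp add: abs_le_iff)
  ultimately show ?thesis
    by blast
qed

lemma has_sum_Sigma_nonneg_bounds: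
  fixes F :: "'a \<times> 'b \<Rightarrow> real"
  assumes nonneg: "\<And>x y. x \<in> A \<Longrightarrow> y \<in> B x \<Longrightarrow> 0 \<le> F (x, y)"
    and g: "(g has_sum G) A"
    and L: "\<And>x. x \<in> A \<Longrightarrow> ((\<lambda>y. F (x, y)) has_sum L x) (B x)"
    and lower: "\<And>x. x \<in> A \<Longrightarrow> l * g x \<le> L x"
    and upper: "\<And>x. x \<in> A \<Longrightarrow> L x \<le> h * g x"
  shows "\<exists>S. (F has_sum S) (Sigma A B) \<and> l * G \<le> S \<and> S \<le> h * G"
proof -
  have "L summable_on A"
  proof (rule summable_on_comparison_test[OF has_sum_imp_summable[OF has_sum_cmult_right[OF g]]])
    show "L x \<le> h * g x" "0 \<le> L x" if "x \<in> A" for x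
      using upper[OF that] has_sum_nonneg[OF L[OF that]] nonneg[OF that] by auto
  qed
  then have "F summable_on Sigma A B"
    by (intro summable_on_SigmaI[where g = L] L nonneg)
  then have F: "(F has_sum infsum F (Sigma A B)) (Sigma A B)"
    by (rule has_sum_infsum)
  then have "(L has_sum infsum F (Sigma A B)) A"
    using L by (rule has_sum_Sigma')
  then have "l * G \<le> infsum F (Sigma A B)" "infsum F (Sigma A B) \<le> h * G"
    using has_sum_cmult_right[OF g] lower upper by (auto intro: has_sum_mono)
  with F show ?thesis
    by blast
qed

definition within_factor :: "real \<Rightarrow> nat \<Rightarrow> real \<Rightarrow> real \<Rightarrow> bool" where
  "within_factor \<epsilon> n X S \<longleftrightarrow> (1 - \<epsilon>) ^ n * X \<le> S \<and> S \<le> (1 + \<epsilon>) ^ n * X"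

lemma within_factor_Suc:
  assumes \<epsilon>: "0 \<le> \<epsilon>" "\<epsilon> \<le> 1" and w: "0 \<le> w"
    and G: "within_factor \<epsilon> n X G" and S: "within_factor \<epsilon> 1 (w * G) S"
  shows "within_factor \<epsilon> (Suc n) (w * X) S"
proof -
  have "(1 - \<epsilon>) ^ Suc n * (w * X) = (1 - \<epsilon>) * w * ((1 - \<epsilon>) ^ n * X)"
    by (simp add: mult_ac)
  also have "\<dots> \<le> (1 - \<epsilon>) * w * G"
    using G \<epsilon> w by (intro mult_left_mono) (auto simp: within_factor_def)
  also have "\<dots> \<le> S"
    using S by (simp add: within_factor_def mult_ac)
  finally have lower: "(1 - \<epsilon>) ^ Suc n * (w * X) \<le> S" .
  have "S \<le> (1 + \<epsilon>) * w * G"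
    using S by (simp add: within_factor_def mult_ac)
  also have "\<dots> \<le> (1 + \<epsilon>) * w * ((1 + \<epsilon>) ^ n * X)"
    using G \<epsilon> w by (intro mult_left_mono) (auto simp: within_factor_def)
  also have "\<dots> = (1 + \<epsilon>) ^ Suc n * (w * X)"
    by (simp add: mult_ac)
  finally show ?thesis
    using lower by (simp add: within_factor_def)
qed

lemma within_factor_ratio:
  fixes \<epsilon> :: real
  assumes \<epsilon>: "0 < \<epsilon>" "\<epsilon> < 1" and "n \<le> d" "X > 0" "Y > 0"
    and S: "within_factor \<epsilon> n X S" and T: "within_factor \<epsilon> d Y T"
  shows "((1 - \<epsilon>) / (1 + \<epsilon>)) ^ d \<le> (S / T) / (X / Y)"
    and "(S / T) / (X / Y) \<le> ((1 + \<epsilon>) / (1 - \<epsilon>)) ^ d"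
proof -
  define p q where "p = S / X" and "q = T / Y"
  have ratio: "(S / T) / (X / Y) = p / q"
    unfolding p_def q_def using \<open>X > 0\<close> \<open>Y > 0\<close> by (simp add: field_simps)
  have "(1 - \<epsilon>) ^ d \<le> (1 - \<epsilon>) ^ n" "(1 + \<epsilon>) ^ n \<le> (1 + \<epsilon>) ^ d"
    using \<epsilon> \<open>n \<le> d\<close> by (auto intro: power_decreasing power_increasing)
  moreover have "(1 - \<epsilon>) ^ n \<le> p" "p \<le> (1 + \<epsilon>) ^ n" "(1 - \<epsilon>) ^ d \<le> q" "q \<le> (1 + \<epsilon>) ^ d"
    using S T \<open>X > 0\<close> \<open>Y > 0\<close> unfolding p_def q_def within_factor_def
    by (simp_all add: field_simps)
  moreover have "0 < (1 - \<epsilon>) ^ d"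
    using \<epsilon> by simp
  ultimately show "((1 - \<epsilon>) / (1 + \<epsilon>)) ^ d \<le> (S / T) / (X / Y)"
    and "(S / T) / (X / Y) \<le> ((1 + \<epsilon>) / (1 - \<epsilon>)) ^ d"
    unfolding ratio power_divide by (auto intro!: frac_le)
qed

lemma exists_eps_ratio_powers_near_1:
  fixes e :: real and d :: nat
  assumes "e > 0"
  shows "\<exists>\<epsilon>. 0 < \<epsilon> \<and> \<epsilon> < 1 \<and> ((1 + \<epsilon>) / (1 - \<epsilon>)) ^ d < 1 + e \<and> 1 - e < ((1 - \<epsilon>) / (1 + \<epsilon>)) ^ d"
proof -
  have "((\<lambda>x::real. ((1 + x) / (1 - x)) ^ d) \<longlongrightarrow> 1) (at_right 0)"
       "((\<lambda>x::real. ((1 - x) / (1 + x)) ^ d) \<longlongrightarrow> 1) (at_right 0)"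
    by (auto intro!: tendsto_eq_intros)
  then have "\<forall>\<^sub>F x in at_right 0. ((1 + x) / (1 - x)) ^ d < 1 + e \<and> 1 - e < ((1 - x) / (1 + x)) ^ d"
    using assms by (intro eventually_conj order_tendstoD(1,2)) auto
  moreover have "\<forall>\<^sub>F x in at_right (0::real). 0 < x \<and> x < 1"
    by (auto simp: eventually_at_right_field intro: exI[of _ 1])
  ultimately show ?thesis
    using eventually_happens[OF eventually_conj] by force
qed

section \<open>The one-dimensional kernel\<close>

definition student_kernel :: "real \<Rightarrow> real \<Rightarrow> real" where
  "student_kernel s x = (1 + x\<^sup>2) powr (-s)"

lemma one_plus_square_pos: "(0::real) < 1 + x\<^sup>2"
  by (simp add: add_pos_nonneg)

lemma student_kernel_pos: "student_kernel s x > 0"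
  unfolding student_kernel_def using one_plus_square_pos[of x] by simp

lemma student_kernel_0 [simp]: "student_kernel s 0 = 1"
  by (simp add: student_kernel_def)

lemma student_kernel_minus [simp]: "student_kernel s (- x) = student_kernel s x"
  by (simp add: student_kernel_def)

lemma continuous_on_student_kernel: "continuous_on A (student_kernel s)"
  unfolding student_kernel_def
  by (intro continuous_intros) (use one_plus_square_pos in \<open>auto simp: less_imp_neq[symmetric]\<close>)

lemma student_kernel_antimono:
  assumes "0 \<le> s" "0 \<le> x" "x \<le> y"
  shows "student_kernel s y \<le> student_kernel s x"
  unfolding student_kernel_def
  by (rule powr_mono2') (use assms one_plus_square_pos in \<open>auto simp: power_mono\<close>)

lemma has_real_derivative_integral_student_kernel:
  assumes "x > 0"
  shows "((\<lambda>y. integral {0..y} (student_kernel s)) has_real_derivative student_kernel s x) (at x)"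
proof -
  have "((\<lambda>y. integral {0..y} (student_kernel s)) has_real_derivative student_kernel s x)
          (at x within {0..x+1})"
    by (rule integral_has_real_derivative) (use assms in \<open>auto intro: continuous_on_student_kernel\<close>)
  moreover have "at x within {0..x+1} = at x"
    by (rule at_within_Icc_at) (use assms in auto)
  ultimately show ?thesis by simp
qed

lemma has_real_derivative_integral_student_kernel_Beta:
  assumes u: "0 < u" "u < 1"
  shows "((\<lambda>u. 2 * integral {0..sqrt (u / (1 - u))} (student_kernel s)) has_real_derivative
            u powr (1/2 - 1) * (1 - u) powr (s - 1/2 - 1)) (at u)"
proof -
  define v where "v = 1 - u"
  have v: "v > 0" using u by (simp add: v_def)
  have q: "u / (1 - u) > 0" using u v by (simp add: v_def)
  have quotient: "((\<lambda>u. u / (1 - u)) has_real_derivative 1 / v\<^sup>2) (at u)"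
    using v unfolding v_def by (auto intro!: derivative_eq_intros simp: field_simps power2_eq_square)
  have deriv_sqrt: "((\<lambda>u. sqrt (u / (1 - u))) has_real_derivative
                       inverse (sqrt (u / v)) / 2 * (1 / v\<^sup>2)) (at u)"
    unfolding v_def by (rule DERIV_chain2[OF DERIV_real_sqrt[OF q] quotient[unfolded v_def]])
  have "sqrt (u / (1 - u)) > 0"
    using q by simp
  then have deriv: "((\<lambda>u. 2 * integral {0..sqrt (u / (1 - u))} (student_kernel s)) has_real_derivative
      2 * (student_kernel s (sqrt (u / v)) * (inverse (sqrt (u / v)) / 2 * (1 / v\<^sup>2)))) (at u)"
    unfolding v_def
    by (intro DERIV_cmult DERIV_chain2[OF has_real_derivative_integral_student_kernel deriv_sqrt[unfolded v_def]])
  have "1 + (sqrt (u / v))\<^sup>2 = 1 / v"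
    using q v by (simp add: v_def field_simps)
  then have "student_kernel s (sqrt (u / v)) = v powr s"
    unfolding student_kernel_def using v by (simp add: powr_minus_divide powr_divide)
  moreover have "inverse (sqrt (u / v)) = v powr (1/2) * u powr (- (1/2))"
    using u v by (simp add: real_sqrt_divide powr_half_sqrt powr_minus_divide)
  moreover have "1 / v\<^sup>2 = v powr (- 2)"
    using v by (simp add: powr_minus_divide powr_realpow)
  moreover have "v powr s * v powr (1/2) * v powr (- 2) = v powr (s - 1/2 - 1)"
  proof -
    have "s - 1/2 - 1 = s + 1/2 + (- 2)" by simp
    then show ?thesis by (simp only: powr_add)
  qed
  ultimately have "2 * (student_kernel s (sqrt (u / v)) * (inverse (sqrt (u / v)) / 2 * (1 / v\<^sup>2)))
          = u powr (1/2 - 1) * (1 - u) powr (s - 1/2 - 1)"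
    unfolding v_def[symmetric] by (simp add: mult_ac)
  with deriv show ?thesis
    by simp
qed

lemma has_integral_Beta_student_kernel:
  assumes U: "0 \<le> U" "U < 1"
  shows "((\<lambda>u. u powr (1/2 - 1) * (1 - u) powr (s - 1/2 - 1)) has_integral
            2 * integral {0..sqrt (U / (1 - U))} (student_kernel s)) {0..U}"
proof -
  \<comment> \<open>The substitution \<open>u = x\<^sup>2 / (1 + x\<^sup>2)\<close>, i.e. \<open>x = \<Psi> u\<close>, turns the kernel into the Beta integrand.\<close>
  define \<Psi> where "\<Psi> u = sqrt (u / (1 - u))" for u :: real
  define F where "F u = 2 * integral {0..\<Psi> u} (student_kernel s)" for u
  have cont_\<Psi>: "continuous_on {0..U} \<Psi>"
    unfolding \<Psi>_def by (intro continuous_intros) (use U in auto)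
  have cont_int: "continuous_on {0..\<Psi> U} (\<lambda>y. integral {0..y} (student_kernel s))"
    by (intro indefinite_integral_continuous_1 integrable_continuous_interval
        continuous_on_student_kernel)
  have \<Psi>_range: "\<Psi> u \<in> {0..\<Psi> U}" if "u \<in> {0..U}" for u
    using that U unfolding \<Psi>_def by (auto simp: field_simps intro!: mult_mono)
  have "continuous_on {0..U} (\<lambda>u. integral {0..\<Psi> u} (student_kernel s))"
    by (rule continuous_on_compose2[OF cont_int cont_\<Psi>]) (use \<Psi>_range in auto)
  then have "continuous_on {0..U} F"
    unfolding F_def by (intro continuous_intros)
  moreover have "(F has_real_derivative u powr (1/2 - 1) * (1 - u) powr (s - 1/2 - 1)) (at u)"
    if "0 < u" "u < U" for u
    unfolding F_def \<Psi>_def using that U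
    by (intro has_real_derivative_integral_student_kernel_Beta) auto
  ultimately have "((\<lambda>u. u powr (1/2 - 1) * (1 - u) powr (s - 1/2 - 1)) has_integral F U - F 0) {0..U}"
    by (intro fundamental_theorem_of_calculus_interior[OF U(1)])
       (auto simp: has_real_derivative_iff_has_vector_derivative)
  then show ?thesis
    by (simp add: F_def \<Psi>_def)
qed

lemma integral_student_kernel_tendsto:
  assumes s: "s > 1/2"
  shows "((\<lambda>X. integral {0..X} (student_kernel s)) \<longlongrightarrow> Beta (1/2) (s - 1/2) / 2) at_top"
proof -
  define B where "B u = u powr (1/2 - 1) * (1 - u) powr (s - 1/2 - 1)" for u :: real
  define H where "H u = integral {0..u} B" for u
  define U where "U X = X\<^sup>2 / (1 + X\<^sup>2)" for X :: real
  have "continuous_on {0..1} H"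
    unfolding H_def B_def
    by (intro indefinite_integral_continuous_1 integrable_Beta') (use s in auto)
  moreover have "(U \<longlongrightarrow> 1) at_top"
    unfolding U_def by real_asymp
  moreover have U_range: "0 \<le> U X" "U X < 1" for X
    using one_plus_square_pos[of X] unfolding U_def by (auto simp: field_simps)
  ultimately have "((\<lambda>X. H (U X) / 2) \<longlongrightarrow> H 1 / 2) at_top"
    by (intro tendsto_divide continuous_on_tendsto_compose[of _ H] tendsto_const)
       (auto simp: less_imp_le)
  moreover have "H 1 = Beta (1/2) (s - 1/2)"
    unfolding H_def B_def
    by (intro integral_unique has_integral_Beta_real) (use s in auto)
  moreover have "\<forall>\<^sub>F X in at_top. H (U X) / 2 = integral {0..X} (student_kernel s)"
    unfolding eventually_at_top_linorder
  proof (intro exI[of _ 0] allI impI)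
    fix X :: real assume "X \<ge> 0"
    have "U X / (1 - U X) = X\<^sup>2"
      using one_plus_square_pos[of X] unfolding U_def by (simp add: field_simps)
    then have "sqrt (U X / (1 - U X)) = X"
      using \<open>X \<ge> 0\<close> by simp
    then show "H (U X) / 2 = integral {0..X} (student_kernel s)"
      using has_integral_Beta_student_kernel[OF U_range[of X], of s]
      unfolding H_def B_def by (simp add: integral_unique)
  qed
  ultimately show ?thesis
    by (simp add: tendsto_cong)
qed

lemma has_sum_student_kernel_lattice:
  assumes s: "s > 1/2" and \<beta>: "\<beta> > 0"
  shows "\<exists>S. ((\<lambda>t::int. student_kernel s (of_int t / \<beta>)) has_sum S) UNIV \<and>
             \<bar>S - \<beta> * Beta (1/2) (s - 1/2)\<bar> \<le> 1"
proof -
  define f where "f = (\<lambda>x. student_kernel s (x / \<beta>))"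
  have "antimono_fun_sum_integral_diff f"
  proof
    show "f y \<le> f x" if "0 \<le> x" "x \<le> y" for x y
      unfolding f_def using s \<beta> that by (intro student_kernel_antimono divide_right_mono) auto
    show "0 \<le> f x" for x
      unfolding f_def using student_kernel_pos less_imp_le by blast
    show "continuous_on {0..} f"
      unfolding f_def
      by (intro continuous_on_compose2[OF continuous_on_student_kernel] continuous_intros) (use \<beta> in auto)
  qed
  moreover have "f (- x) = f x" for x
    by (simp add: f_def)
  moreover have "((\<lambda>X. integral {0..X} f) \<longlongrightarrow> \<beta> * (Beta (1/2) (s - 1/2) / 2)) at_top"
  proof -
    have "filterlim (\<lambda>X. 1 / \<beta> * X) at_top at_top"
      using \<beta> by (intro filterlim_tendsto_pos_mult_at_top[OF tendsto_const] filterlim_ident) auto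
    then have "((\<lambda>X. \<beta> * integral {0..X / \<beta>} (student_kernel s)) \<longlongrightarrow> \<beta> * (Beta (1/2) (s - 1/2) / 2)) at_top"
      by (intro tendsto_mult_left filterlim_compose[OF integral_student_kernel_tendsto[OF s]]) simp
    moreover have "integral {0..X} f = \<beta> * integral {0..X / \<beta>} (student_kernel s)" for X
    proof -
      have "(\<lambda>x. x * \<beta>) ` {0..X / \<beta>} = {0..X}"
        using image_mult_atLeastAtMost[OF \<beta>, of 0 "X / \<beta>"] \<beta> by (simp add: mult.commute)
      then show ?thesis
        using integral_stretch_real[of "1 / \<beta>" 0 "X / \<beta>" "student_kernel s"] \<beta>
        by (simp add: f_def)
    qed
    ultimately show ?thesis
      by simp
  qed
  ultimately obtain S where "((\<lambda>t::int. f (of_int t)) has_sum S) UNIV"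
      "\<bar>S - 2 * (\<beta> * (Beta (1/2) (s - 1/2) / 2))\<bar> \<le> f 0"
    using has_sum_int_antimono_even by blast
  then show ?thesis
    by (auto simp: f_def)
qed

lemma Beta_half_pos: "(s::real) > 1/2 \<Longrightarrow> Beta (1/2) (s - 1/2) > 0"
  unfolding Beta_def by (intro divide_pos_pos mult_pos_pos Gamma_real_pos) auto

lemma has_sum_lattice_1d:
  fixes s b c :: real
  assumes s: "s > 1/2" and b: "b > 0" and c: "c > 0"
  shows "\<exists>L. ((\<lambda>t::int. (c + (of_int t)\<^sup>2 / b\<^sup>2) powr (-s)) has_sum L) UNIV \<and>
             \<bar>L - b * Beta (1/2) (s - 1/2) * c powr (1/2 - s)\<bar> \<le> c powr (-s)"
proof -
  define \<beta> where "\<beta> = b * sqrt c"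
  have "\<beta> > 0"
    using b c by (simp add: \<beta>_def)
  obtain S where S: "((\<lambda>t::int. student_kernel s (of_int t / \<beta>)) has_sum S) UNIV"
      and S_close: "\<bar>S - \<beta> * Beta (1/2) (s - 1/2)\<bar> \<le> 1"
    using has_sum_student_kernel_lattice[OF s \<open>0 < \<beta>\<close>] by blast
  have "(c + (of_int t)\<^sup>2 / b\<^sup>2) powr (-s) = c powr (-s) * student_kernel s (of_int t / \<beta>)" for t :: int
  proof -
    have "c + (of_int t)\<^sup>2 / b\<^sup>2 = c * (1 + (of_int t / \<beta>)\<^sup>2)"
      using b c unfolding \<beta>_def by (simp add: field_simps power2_eq_square)
    then show ?thesis
      unfolding student_kernel_def using c one_plus_square_pos by (simp add: powr_mult)
  qed
  then have "((\<lambda>t::int. (c + (of_int t)\<^sup>2 / b\<^sup>2) powr (-s)) has_sum c powr (-s) * S) UNIV"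
    using has_sum_cmult_right[OF S] by simp
  moreover have "\<bar>c powr (-s) * S - c powr (-s) * (\<beta> * Beta (1/2) (s - 1/2))\<bar> \<le> c powr (-s)"
    using mult_left_mono[OF S_close, of "c powr (-s)"]
    by (simp add: right_diff_distrib[symmetric] abs_mult)
  moreover have "c powr (-s) * (\<beta> * Beta (1/2) (s - 1/2)) = b * Beta (1/2) (s - 1/2) * c powr (1/2 - s)"
    using c unfolding \<beta>_def by (simp add: powr_add[symmetric] powr_half_sqrt[symmetric])
  ultimately show ?thesis
    by metis
qed

lemma has_sum_lattice_1d_asymp:
  fixes s \<epsilon> :: real
  assumes s: "s > 1/2" and \<epsilon>: "\<epsilon> > 0"
  shows "\<exists>A>0. \<forall>b c. A \<le> b \<longrightarrow> 1 \<le> c \<longrightarrow> (\<exists>L.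
           ((\<lambda>t::int. (c + (of_int t)\<^sup>2 / b\<^sup>2) powr (-s)) has_sum L) UNIV \<and>
           within_factor \<epsilon> 1 (b * Beta (1/2) (s - 1/2) * c powr (1/2 - s)) L)"
proof -
  define B where "B = Beta (1/2) (s - 1/2)"
  have B: "B > 0"
    unfolding B_def using s by (rule Beta_half_pos)
  define A where "A = max 1 (1 / (\<epsilon> * B))"
  have "\<exists>L. ((\<lambda>t::int. (c + (of_int t)\<^sup>2 / b\<^sup>2) powr (-s)) has_sum L) UNIV \<and>
           within_factor \<epsilon> 1 (b * B * c powr (1/2 - s)) L"
    if b: "A \<le> b" and c: "1 \<le> c" for b c :: real
  proof -
    have "1 \<le> \<epsilon> * B * b"
      using b \<epsilon> B unfolding A_def by (simp add: field_simps)
    also have "\<dots> \<le> \<epsilon> * B * b * sqrt c"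
      using mult_left_mono[of 1 "sqrt c" "\<epsilon> * B * b"] b c \<epsilon> B unfolding A_def by simp
    finally have "1 * c powr (-s) \<le> (\<epsilon> * B * b * sqrt c) * c powr (-s)"
      by (rule mult_right_mono) simp
    moreover have "c powr (1/2 - s) = sqrt c * c powr (-s)"
      using c by (simp add: powr_add[symmetric] powr_half_sqrt[symmetric])
    ultimately have "c powr (-s) \<le> \<epsilon> * (b * B * c powr (1/2 - s))"
      by (simp add: mult_ac)
    moreover obtain L where "((\<lambda>t::int. (c + (of_int t)\<^sup>2 / b\<^sup>2) powr (-s)) has_sum L) UNIV"
        and "\<bar>L - b * B * c powr (1/2 - s)\<bar> \<le> c powr (-s)"
      using has_sum_lattice_1d[OF s, of b c] b c unfolding A_def B_def by auto
    ultimately show ?thesis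
      by (auto simp: within_factor_def abs_le_iff algebra_simps)
  qed
  moreover have "A > 0"
    unfolding A_def by simp
  ultimately show ?thesis
    unfolding B_def by blast
qed

section \<open>Multidimensional lattice sums\<close>

definition int_vecs :: "nat set \<Rightarrow> (nat \<Rightarrow> int) set" where
  "int_vecs I = {k. \<forall>i. i \<notin> I \<longrightarrow> k i = 0}"

lemma int_vecs_empty: "int_vecs {} = {\<lambda>_. 0}"
  by (auto simp: int_vecs_def)

lemma has_sum_int_vecs_insert:
  assumes "j \<notin> I"
  shows "(f has_sum S) (int_vecs (insert j I)) \<longleftrightarrow>
         ((\<lambda>(k, t). f (k(j := t))) has_sum S) (int_vecs I \<times> UNIV)"
  by (rule has_sum_reindex_bij_witness[where i = "\<lambda>k. (k(j := 0), k j)" and j = "\<lambda>(k, t). k(j := t)", symmetric])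
     (use assms in \<open>auto simp: int_vecs_def\<close>)

definition lattice_weight :: "nat set \<Rightarrow> real \<Rightarrow> real \<Rightarrow> (nat \<Rightarrow> real) \<Rightarrow> (nat \<Rightarrow> int) \<Rightarrow> real" where
  "lattice_weight I c s a k = (c + (\<Sum>i\<in>I. (of_int (k i))\<^sup>2 / (a i)\<^sup>2)) powr (-s)"

lemma lattice_weight_nonneg: "0 \<le> lattice_weight I c s a k"
  by (simp add: lattice_weight_def)

lemma sum_squares_ratio_nonneg: "0 \<le> (\<Sum>i\<in>I. (of_int (k i))\<^sup>2 / (a i)\<^sup>2 :: real)"
  by (intro sum_nonneg) simp

lemma lattice_weight_insert:
  assumes "finite I" "j \<notin> I"
  shows "lattice_weight (insert j I) c s a (k(j := t)) =
           ((c + (\<Sum>i\<in>I. (of_int (k i))\<^sup>2 / (a i)\<^sup>2)) + (of_int t)\<^sup>2 / (a j)\<^sup>2) powr (-s)"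
proof -
  have "(\<Sum>i\<in>I. (of_int ((k(j := t)) i))\<^sup>2 / (a i)\<^sup>2) = (\<Sum>i\<in>I. (of_int (k i))\<^sup>2 / (a i)\<^sup>2 :: real)"
    using assms by (intro sum.cong) auto
  then show ?thesis
    using assms by (simp add: lattice_weight_def algebra_simps)
qed

text \<open>The integral of \<open>(1 + \<parallel>x\<parallel>\<^sup>2) powr (-s)\<close> over \<open>\<real>\<^sup>n\<close>.\<close>

definition student_integral :: "real \<Rightarrow> nat \<Rightarrow> real" where
  "student_integral s n = pi powr (real n / 2) * Gamma (s - real n / 2) / Gamma s"

lemma student_integral_pos: "s > real n / 2 \<Longrightarrow> student_integral s n > 0"
  unfolding student_integral_def
  by (intro divide_pos_pos mult_pos_pos Gamma_real_pos) (auto intro: order.strict_trans2)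

lemma student_integral_Suc:
  assumes "s > 1/2"
  shows "Beta (1/2) (s - 1/2) * student_integral (s - 1/2) n = student_integral s (Suc n)"
proof -
  have "Gamma (s - 1/2) > 0"
    by (rule Gamma_real_pos) (use assms in simp)
  have "Beta (1/2) (s - 1/2) * student_integral (s - 1/2) n =
      (sqrt pi * pi powr (real n / 2)) * Gamma (s - 1/2 - real n / 2) / Gamma s *
      (Gamma (s - 1/2) / Gamma (s - 1/2))"
    unfolding Beta_def student_integral_def Gamma_one_half_real by simp
  also have "\<dots> = pi powr (real (Suc n) / 2) * Gamma (s - 1/2 - real n / 2) / Gamma s"
    using \<open>Gamma (s - 1/2) > 0\<close>
    by (simp add: powr_half_sqrt[symmetric] powr_add[symmetric] add_divide_distrib)
  also have "s - 1/2 - real n / 2 = s - real (Suc n) / 2"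
    by (simp add: field_simps)
  finally show ?thesis
    unfolding student_integral_def .
qed

definition lattice_approx :: "nat set \<Rightarrow> real \<Rightarrow> real \<Rightarrow> (nat \<Rightarrow> real) \<Rightarrow> real" where
  "lattice_approx I c s a =
     c powr (real (card I) / 2 - s) * (\<Prod>i\<in>I. a i) * student_integral s (card I)"

lemma lattice_approx_pos:
  assumes "finite I" "c > 0" "\<forall>i\<in>I. a i > 0" "real (card I) / 2 < s"
  shows "lattice_approx I c s a > 0"
  using assms by (auto simp: lattice_approx_def intro!: mult_pos_pos prod_pos student_integral_pos)

lemma lattice_approx_insert:
  assumes "finite I" "j \<notin> I" "s > 1/2"
  shows "a j * Beta (1/2) (s - 1/2) * lattice_approx I c (s - 1/2) a = lattice_approx (insert j I) c s a"
proof -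
  have exponent: "real (card I) / 2 - (s - 1/2) = real (card (insert j I)) / 2 - s"
    using assms by (simp add: field_simps)
  have "a j * Beta (1/2) (s - 1/2) * lattice_approx I c (s - 1/2) a =
      c powr (real (card (insert j I)) / 2 - s) * (a j * (\<Prod>i\<in>I. a i)) *
      (Beta (1/2) (s - 1/2) * student_integral (s - 1/2) (card I))"
    unfolding lattice_approx_def exponent[symmetric] by (simp only: mult_ac)
  also have "\<dots> = lattice_approx (insert j I) c s a"
    using assms by (simp add: lattice_approx_def student_integral_Suc)
  finally show ?thesis .
qed

lemma has_sum_lattice_weight_insert:
  fixes \<epsilon> :: real
  assumes I: "finite I" "j \<notin> I" and c: "1 \<le> c" and s: "s > 1/2"
    and \<epsilon>: "0 \<le> \<epsilon>" "\<epsilon> \<le> 1" and "0 \<le> a j"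
    and G: "(lattice_weight I c (s - 1/2) a has_sum G) (int_vecs I)"
      "within_factor \<epsilon> (card I) (lattice_approx I c (s - 1/2) a) G"
    and one_dim: "\<And>c'. 1 \<le> c' \<Longrightarrow> \<exists>L.
           ((\<lambda>t::int. (c' + (of_int t)\<^sup>2 / (a j)\<^sup>2) powr (-s)) has_sum L) UNIV \<and>
           within_factor \<epsilon> 1 (a j * Beta (1/2) (s - 1/2) * c' powr (1/2 - s)) L"
  shows "\<exists>S. (lattice_weight (insert j I) c s a has_sum S) (int_vecs (insert j I)) \<and>
             within_factor \<epsilon> (card (insert j I)) (lattice_approx (insert j I) c s a) S"
proof -
  define w where "w = a j * Beta (1/2) (s - 1/2)"
  define c' where "c' k = c + (\<Sum>i\<in>I. (of_int (k i))\<^sup>2 / (a i)\<^sup>2)" for k :: "nat \<Rightarrow> int"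
  have "1 \<le> c' k" for k
    unfolding c'_def using c sum_squares_ratio_nonneg[where I = I and k = k and a = a] by linarith
  then have "\<forall>k. \<exists>L. ((\<lambda>t::int. (c' k + (of_int t)\<^sup>2 / (a j)\<^sup>2) powr (-s)) has_sum L) UNIV \<and>
           within_factor \<epsilon> 1 (w * c' k powr (1/2 - s)) L"
    unfolding w_def using one_dim by blast
  then obtain L where L: "\<And>k. ((\<lambda>t::int. (c' k + (of_int t)\<^sup>2 / (a j)\<^sup>2) powr (-s)) has_sum L k) UNIV"
    and L_bounds: "\<And>k. within_factor \<epsilon> 1 (w * c' k powr (1/2 - s)) (L k)"
    by metis
  have weight: "lattice_weight I c (s - 1/2) a k = c' k powr (1/2 - s)" for k
    by (simp add: lattice_weight_def c'_def)
  have "\<exists>S. ((\<lambda>(k, t). lattice_weight (insert j I) c s a (k(j := t))) has_sum S) (int_vecs I \<times> UNIV) \<and>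
             (1 - \<epsilon>) * w * G \<le> S \<and> S \<le> (1 + \<epsilon>) * w * G"
  proof (rule has_sum_Sigma_nonneg_bounds[OF _ G(1)])
    show "((\<lambda>t. case (k, t) of (k, t) \<Rightarrow> lattice_weight (insert j I) c s a (k(j := t))) has_sum L k) UNIV"
      for k
      using L[of k] by (simp add: lattice_weight_insert[OF I] c'_def)
  qed (use L_bounds in \<open>auto simp: within_factor_def weight lattice_weight_nonneg mult_ac\<close>)
  then obtain S where S: "(lattice_weight (insert j I) c s a has_sum S) (int_vecs (insert j I))"
      and S_factor: "within_factor \<epsilon> 1 (w * G) S"
    by (auto simp: has_sum_int_vecs_insert[OF I(2)] within_factor_def mult_ac)
  have "0 \<le> w"
    unfolding w_def using Beta_half_pos[OF s] \<open>0 \<le> a j\<close> by simp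
  then have "within_factor \<epsilon> (Suc (card I)) (w * lattice_approx I c (s - 1/2) a) S"
    by (rule within_factor_Suc[OF \<epsilon> _ G(2) S_factor])
  moreover have "w * lattice_approx I c (s - 1/2) a = lattice_approx (insert j I) c s a"
    unfolding w_def by (rule lattice_approx_insert[OF I s])
  ultimately show ?thesis
    using S I by auto
qed

lemma has_sum_lattice_weight_asymp:
  fixes \<epsilon> :: real
  assumes "finite I" "real (card I) / 2 < s" and \<epsilon>: "0 < \<epsilon>" "\<epsilon> < 1"
  shows "\<exists>A>0. \<forall>c a. 1 \<le> c \<longrightarrow> (\<forall>i\<in>I. A \<le> a i) \<longrightarrow> (\<exists>S.
           (lattice_weight I c s a has_sum S) (int_vecs I) \<and>
           within_factor \<epsilon> (card I) (lattice_approx I c s a) S)"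
  using assms(1,2)
proof (induction I arbitrary: s rule: finite_induct)
  case empty
  have "Gamma s > 0"
    using empty by (intro Gamma_real_pos) simp
  then have "lattice_approx {} c s a = c powr (-s)" for c a
    by (simp add: lattice_approx_def student_integral_def)
  moreover have "(lattice_weight {} c s a has_sum c powr (-s)) (int_vecs {})" for c a
    using has_sum_finite[of "{\<lambda>_. 0}" "lattice_weight {} c s a"]
    by (simp add: int_vecs_empty lattice_weight_def)
  ultimately show ?case
    by (intro exI[of _ 1]) (fastforce simp: within_factor_def)
next
  case (insert j I)
  have s: "s > 1/2" "real (card I) / 2 < s - 1/2"
    using insert by auto
  obtain A1 where "A1 > 0" and A1: "\<forall>c a. 1 \<le> c \<longrightarrow> (\<forall>i\<in>I. A1 \<le> a i) \<longrightarrow> (\<exists>G.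
           (lattice_weight I c (s - 1/2) a has_sum G) (int_vecs I) \<and>
           within_factor \<epsilon> (card I) (lattice_approx I c (s - 1/2) a) G)"
    using insert.IH[OF s(2)] by blast
  obtain A2 where "A2 > 0" and A2: "\<forall>b c. A2 \<le> b \<longrightarrow> 1 \<le> c \<longrightarrow> (\<exists>L.
           ((\<lambda>t::int. (c + (of_int t)\<^sup>2 / b\<^sup>2) powr (-s)) has_sum L) UNIV \<and>
           within_factor \<epsilon> 1 (b * Beta (1/2) (s - 1/2) * c powr (1/2 - s)) L)"
    using has_sum_lattice_1d_asymp[OF s(1) \<epsilon>(1)] by blast
  have "\<exists>S. (lattice_weight (insert j I) c s a has_sum S) (int_vecs (insert j I)) \<and>
           within_factor \<epsilon> (card (insert j I)) (lattice_approx (insert j I) c s a) S"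
    if c: "1 \<le> c" and a: "\<forall>i\<in>insert j I. max A1 A2 \<le> a i" for c a
  proof -
    obtain G where "(lattice_weight I c (s - 1/2) a has_sum G) (int_vecs I)"
      and "within_factor \<epsilon> (card I) (lattice_approx I c (s - 1/2) a) G"
      using A1 c a by force
    moreover have "0 \<le> a j"
      using a \<open>A2 > 0\<close> by force
    ultimately show ?thesis
      using has_sum_lattice_weight_insert[OF insert(1,2) c s(1)] A2 a \<epsilon> by force
  qed
  moreover have "max A1 A2 > 0"
    using \<open>A1 > 0\<close> by simp
  ultimately show ?case
    by blast
qed

lemma has_sum_lattice_weight_fibre:
  assumes "finite I" "finite J" "I \<inter> J = {}"
  shows "(lattice_weight (I \<union> J) c s a has_sum S) {k \<in> int_vecs (I \<union> J). \<forall>i\<in>I. k i = k0 i} \<longleftrightarrow>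
         (lattice_weight J (c + (\<Sum>i\<in>I. (of_int (k0 i))\<^sup>2 / (a i)\<^sup>2)) s a has_sum S) (int_vecs J)"
proof (rule has_sum_reindex_bij_witness[where i = "\<lambda>k i. if i \<in> J then k i else 0"
                                        and j = "\<lambda>k i. if i \<in> I then k0 i else k i", symmetric])
  fix k assume k: "k \<in> int_vecs J"
  define k' where "k' i = (if i \<in> I then k0 i else k i)" for i
  have "(\<Sum>i\<in>I \<union> J. (of_int (k' i))\<^sup>2 / (a i)\<^sup>2) =
        (\<Sum>i\<in>I. (of_int (k0 i))\<^sup>2 / (a i)\<^sup>2) + (\<Sum>i\<in>J. (of_int (k i))\<^sup>2 / (a i)\<^sup>2 :: real)"
  proof -
    have "(\<Sum>i\<in>J. (of_int (k' i))\<^sup>2 / (a i)\<^sup>2) = (\<Sum>i\<in>J. (of_int (k i))\<^sup>2 / (a i)\<^sup>2 :: real)"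
      using assms by (intro sum.cong) (auto simp: k'_def)
    then show ?thesis
      using assms by (simp add: sum.union_disjoint k'_def)
  qed
  then show "lattice_weight (I \<union> J) c s a k' =
             lattice_weight J (c + (\<Sum>i\<in>I. (of_int (k0 i))\<^sup>2 / (a i)\<^sup>2)) s a k"
    by (simp add: lattice_weight_def add.assoc)
qed (use assms in \<open>auto simp: int_vecs_def fun_eq_iff\<close>)

section \<open>The Tsallis marginal\<close>

lemma tsallis_weight_eq_lattice_weight:
  "tsallis_weight m d a = lattice_weight {..<d} 1 ((m + real d) / 2) a"
  by (simp add: fun_eq_iff tsallis_weight_def lattice_weight_def minus_divide_left)

lemma zvecs_eq_int_vecs: "zvecs d = int_vecs {..<d}"
  by (auto simp: zvecs_def int_vecs_def)

lemma tsallis_marginal_eq: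
  assumes "d' \<le> d"
    and full: "(lattice_weight {..<d} 1 ((m + real d) / 2) a has_sum Z) (int_vecs {..<d})"
    and fibre: "(lattice_weight {d'..<d} (1 + (\<Sum>i<d'. (of_int (k0 i))\<^sup>2 / (a i)\<^sup>2)) ((m + real d) / 2) a
                  has_sum M) (int_vecs {d'..<d})"
  shows "tsallis_marginal m d d' a k0 = M / Z"
proof -
  have "(lattice_weight ({..<d'} \<union> {d'..<d}) 1 ((m + real d) / 2) a has_sum M)
                   {k \<in> int_vecs ({..<d'} \<union> {d'..<d}). \<forall>i\<in>{..<d'}. k i = k0 i}"
    using fibre by (subst has_sum_lattice_weight_fibre) auto
  moreover have "{..<d'} \<union> {d'..<d} = {..<d}"
    using assms(1) by auto
  moreover have "{k \<in> int_vecs {..<d}. \<forall>i\<in>{..<d'}. k i = k0 i} = {k \<in> zvecs d. \<forall>i<d'. k i = k0 i}"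
    by (auto simp: zvecs_eq_int_vecs)
  ultimately have "(tsallis_weight m d a has_sum M) {k \<in> zvecs d. \<forall>i<d'. k i = k0 i}"
    by (simp add: tsallis_weight_eq_lattice_weight)
  moreover have "tsallis_f m d a = Z"
    unfolding tsallis_f_def tsallis_weight_eq_lattice_weight zvecs_eq_int_vecs
    using full by (rule infsumI)
  ultimately have "(tsallis_p m d a has_sum M / Z) {k \<in> zvecs d. \<forall>i<d'. k i = k0 i}"
    unfolding tsallis_p_def using has_sum_cmult_right[where c = "1 / Z"] by simp
  then show ?thesis
    unfolding tsallis_marginal_def by (rule infsumI)
qed

lemma tsallis_approx_eq:
  fixes k0 :: "nat \<Rightarrow> int"
  assumes "d' \<le> d" "m > 0" and a: "\<forall>i<d. a i > 0"
  defines "c0 \<equiv> 1 + (\<Sum>i<d'. (of_int (k0 i))\<^sup>2 / (a i)\<^sup>2)" and "s \<equiv> (m + real d) / 2"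
  shows "tsallis_approx m d' a k0 = lattice_approx {d'..<d} c0 s a / lattice_approx {..<d} 1 s a"
proof -
  have exponents: "real (d - d') / 2 - s = - (m + real d') / 2" "s - real (d - d') / 2 = (m + real d') / 2"
      "s - real d / 2 = m / 2"
    using assms(1) by (simp_all add: s_def of_nat_diff field_simps)
  have "pi powr (real d / 2) = pi powr (real (d - d') / 2) * pi powr (real d' / 2)"
    using assms(1) by (simp add: of_nat_diff powr_add[symmetric] field_simps)
  moreover have "(\<Prod>i<d. a i) = (\<Prod>i<d'. a i) * (\<Prod>i\<in>{d'..<d}. a i)"
    using assms(1) by (simp add: lessThan_atLeast0 prod.atLeastLessThan_concat)
  ultimately have "lattice_approx {d'..<d} c0 s a / lattice_approx {..<d} 1 s a =
      c0 powr (- (m + real d') / 2) * (\<Prod>i\<in>{d'..<d}. a i) *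
        (pi powr (real (d - d') / 2) * Gamma ((m + real d') / 2) / Gamma s) /
      ((\<Prod>i<d'. a i) * (\<Prod>i\<in>{d'..<d}. a i) *
        (pi powr (real (d - d') / 2) * pi powr (real d' / 2) * Gamma (m / 2) / Gamma s))"
    unfolding lattice_approx_def student_integral_def card_atLeastLessThan card_lessThan exponents
    by simp
  also have "\<dots> = tsallis_approx m d' a k0"
  proof -
    have "(\<Prod>i\<in>{d'..<d}. a i) > 0" "(\<Prod>i<d'. a i) > 0"
      using a assms(1) by (auto intro!: prod_pos)
    moreover have "Gamma s > 0" "Gamma (m / 2) > 0"
      using assms(2) by (auto simp: s_def intro!: Gamma_real_pos)
    ultimately show ?thesis
      unfolding tsallis_approx_def c0_def by (simp add: field_simps del: prod_zero_iff)
  qed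
  finally show ?thesis ..
qed

lemma tsallis_marginal_over_approx_bounds:
  fixes \<epsilon> :: real
  assumes "d' \<le> d" "m > 0" and \<epsilon>: "0 < \<epsilon>" "\<epsilon> < 1"
  shows "\<exists>A. \<forall>a. (\<forall>i<d. A \<le> a i) \<longrightarrow>
           ((1 - \<epsilon>) / (1 + \<epsilon>)) ^ d \<le> tsallis_marginal m d d' a k0 / tsallis_approx m d' a k0 \<and>
           tsallis_marginal m d d' a k0 / tsallis_approx m d' a k0 \<le> ((1 + \<epsilon>) / (1 - \<epsilon>)) ^ d"
proof -
  define s where "s = (m + real d) / 2"
  have s: "real (card {..<d}) / 2 < s" "real (card {d'..<d}) / 2 < s"
    using assms by (auto simp: s_def of_nat_diff)
  obtain A1 where "A1 > 0" and A1: "\<forall>c a. 1 \<le> c \<longrightarrow> (\<forall>i\<in>{..<d}. A1 \<le> a i) \<longrightarrow> (\<exists>Z.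
           (lattice_weight {..<d} c s a has_sum Z) (int_vecs {..<d}) \<and>
           within_factor \<epsilon> (card {..<d}) (lattice_approx {..<d} c s a) Z)"
    using has_sum_lattice_weight_asymp[OF _ s(1) \<epsilon>] by blast
  obtain A2 where A2: "\<forall>c a. 1 \<le> c \<longrightarrow> (\<forall>i\<in>{d'..<d}. A2 \<le> a i) \<longrightarrow> (\<exists>M.
           (lattice_weight {d'..<d} c s a has_sum M) (int_vecs {d'..<d}) \<and>
           within_factor \<epsilon> (card {d'..<d}) (lattice_approx {d'..<d} c s a) M)"
    using has_sum_lattice_weight_asymp[OF _ s(2) \<epsilon>] by blast
  have "((1 - \<epsilon>) / (1 + \<epsilon>)) ^ d \<le> tsallis_marginal m d d' a k0 / tsallis_approx m d' a k0 \<and>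
        tsallis_marginal m d d' a k0 / tsallis_approx m d' a k0 \<le> ((1 + \<epsilon>) / (1 - \<epsilon>)) ^ d"
    if a: "\<forall>i<d. max A1 A2 \<le> a i" for a
  proof -
    define c0 where "c0 = 1 + (\<Sum>i<d'. (of_int (k0 i))\<^sup>2 / (a i)\<^sup>2)"
    have "1 \<le> c0"
      unfolding c0_def using sum_squares_ratio_nonneg[where I = "{..<d'}" and k = k0 and a = a] by simp
    obtain Z where Z: "(lattice_weight {..<d} 1 s a has_sum Z) (int_vecs {..<d})"
        "within_factor \<epsilon> d (lattice_approx {..<d} 1 s a) Z"
      using A1[rule_format, of 1 a] a by auto
    obtain M where M: "(lattice_weight {d'..<d} c0 s a has_sum M) (int_vecs {d'..<d})"
        "within_factor \<epsilon> (d - d') (lattice_approx {d'..<d} c0 s a) M"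
      using A2[rule_format, of c0 a] a \<open>1 \<le> c0\<close> by auto
    have "\<forall>i<d. a i > 0"
      using a \<open>A1 > 0\<close> by (auto intro: less_le_trans)
    then have "lattice_approx {..<d} 1 s a > 0" "lattice_approx {d'..<d} c0 s a > 0"
      using s \<open>1 \<le> c0\<close> by (auto intro!: lattice_approx_pos)
    moreover have "tsallis_marginal m d d' a k0 = M / Z"
      using tsallis_marginal_eq[OF assms(1)] Z(1) M(1) unfolding s_def c0_def by blast
    moreover have "tsallis_approx m d' a k0 = lattice_approx {d'..<d} c0 s a / lattice_approx {..<d} 1 s a"
      using tsallis_approx_eq[OF assms(1,2) \<open>\<forall>i<d. a i > 0\<close>] unfolding s_def c0_def .
    ultimately show ?thesis
      using within_factor_ratio[OF \<epsilon>, of "d - d'" d] Z(2) M(2) by auto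
  qed
  then show ?thesis
    by blast
qed

theorem theorem9:
  fixes d d' :: nat and m :: real and k0 :: "nat \<Rightarrow> int"
  assumes "d \<ge> 2" and "m > 0" and "1 \<le> d'" and "d' \<le> d - 1"
  shows "\<forall>\<epsilon>>0. \<exists>A. \<forall>a :: nat \<Rightarrow> real. (\<forall>i<d. A \<le> a i) \<longrightarrow>
           \<bar>tsallis_marginal m d d' a k0 / tsallis_approx m d' a k0 - 1\<bar> < \<epsilon>"
proof (intro allI impI)
  fix e :: real
  assume "e > 0"
  then obtain \<epsilon> where \<epsilon>: "0 < \<epsilon>" "\<epsilon> < 1"
    and close: "((1 + \<epsilon>) / (1 - \<epsilon>)) ^ d < 1 + e" "1 - e < ((1 - \<epsilon>) / (1 + \<epsilon>)) ^ d"
    using exists_eps_ratio_powers_near_1 by blast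
  have "d' \<le> d"
    using assms by simp
  from tsallis_marginal_over_approx_bounds[OF this \<open>m > 0\<close> \<epsilon>, of k0]
  obtain A where A: "\<And>a. \<forall>i<d. A \<le> a i \<Longrightarrow>
           ((1 - \<epsilon>) / (1 + \<epsilon>)) ^ d \<le> tsallis_marginal m d d' a k0 / tsallis_approx m d' a k0 \<and>
           tsallis_marginal m d d' a k0 / tsallis_approx m d' a k0 \<le> ((1 + \<epsilon>) / (1 - \<epsilon>)) ^ d"
    by blast
  show "\<exists>A. \<forall>a :: nat \<Rightarrow> real. (\<forall>i<d. A \<le> a i) \<longrightarrow>
           \<bar>tsallis_marginal m d d' a k0 / tsallis_approx m d' a k0 - 1\<bar> < e"
  proof (intro exI[of _ A] allI impI)
    fix a :: "nat \<Rightarrow> real"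
    assume "\<forall>i<d. A \<le> a i"
    from A[OF this] close show "\<bar>tsallis_marginal m d d' a k0 / tsallis_approx m d' a k0 - 1\<bar> < e"
      unfolding abs_less_iff by linarith
  qed
qed

end
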